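(* Let $f\in\mathbb R[x_1,\dots,x_n]$ be not identically zero and let $s(x)=\sum_{j=1}^n x_j$. Then the polynomial $s f$ has at least $n$ distinct monomials (with nonzero coefficients). *)

theory Defs
  imports Complex_Main "HOL-Library.Poly_Mapping"
begin

text \<open>Multivariate real polynomials: finitely supported maps from monomials
  (exponent vectors, finitely supported maps variable index to exponent) to real
  coefficients; multiplication is the convolution product of Poly_Mapping.
  Variable x_j (j = 0..n-1) is the monomial with exponent 1 at j.\<close>

type_synonym mpoly = "(nat \<Rightarrow>\<^sub>0 nat) \<Rightarrow>\<^sub>0 real"

definition Var :: "nat \<Rightarrow> mpoly" where
  "Var j = Poly_Mapping.single (Poly_Mapping.single j 1) 1"

definition in_vars :: "nat \<Rightarrow> mpoly \<Rightarrow> bool" where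
  "in_vars n f \<longleftrightarrow> (\<forall>m\<in>Poly_Mapping.keys f. Poly_Mapping.keys m \<subseteq> {..<n})"

end

theory Submission
  imports Defs
begin

text \<open>For each variable \<open>x\<^sub>j\<close> pick a monomial \<open>m\<^sub>j\<close> of \<open>f\<close> in which \<open>x\<^sub>j\<close> occurs with the
  largest exponent. The monomial \<open>x\<^sub>j m\<^sub>j\<close> of \<open>s f\<close> can only arise as \<open>x\<^sub>j \<cdot> m\<^sub>j\<close>, since
  \<open>x\<^sub>k q = x\<^sub>j m\<^sub>j\<close> with \<open>k \<noteq> j\<close> would force a monomial \<open>q\<close> of \<open>f\<close> with an even larger exponent
  of \<open>x\<^sub>j\<close>; so its coefficient is that of \<open>m\<^sub>j\<close> in \<open>f\<close>, which is nonzero. The same exponent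
  comparison shows that the monomials \<open>x\<^sub>j m\<^sub>j\<close> are pairwise distinct.\<close>

lemma lookup_single_mult_add:
  fixes f :: "'a::cancel_comm_monoid_add \<Rightarrow>\<^sub>0 'b::semiring_0"
  shows "Poly_Mapping.lookup (Poly_Mapping.single a c * f) (a + m) = c * Poly_Mapping.lookup f m"
proof -
  have "Poly_Mapping.lookup (Poly_Mapping.single a c * f) (a + m)
      = Sum_any (\<lambda>l. c * Sum_any (\<lambda>q. Poly_Mapping.lookup f q when a + m = a + q) when l = a)"
    unfolding lookup_mult by (rule Sum_any.cong) (simp add: lookup_single when_def)
  also have "\<dots> = c * Sum_any (\<lambda>q. Poly_Mapping.lookup f m when q = m)"
    by (simp add: when_def)
  finally show ?thesis
    by simp
qed

lemma lookup_single_mult_eq_0: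
  fixes f :: "'a::comm_monoid_add \<Rightarrow>\<^sub>0 'b::semiring_0"
  assumes "\<And>q. q \<in> Poly_Mapping.keys f \<Longrightarrow> a + q \<noteq> k"
  shows "Poly_Mapping.lookup (Poly_Mapping.single a c * f) k = 0"
proof -
  have "k \<notin> {x + q |x q. x \<in> Poly_Mapping.keys (Poly_Mapping.single a c) \<and> q \<in> Poly_Mapping.keys f}"
    using assms by auto
  then have "k \<notin> Poly_Mapping.keys (Poly_Mapping.single a c * f)"
    using keys_mult by blast
  then show ?thesis
    by (simp add: in_keys_iff)
qed

lemma obtain_keys_with_max_exponents:
  fixes f :: "('v \<Rightarrow>\<^sub>0 nat) \<Rightarrow>\<^sub>0 'b::zero"
  assumes "f \<noteq> 0"
  obtains M where "\<And>j. M j \<in> Poly_Mapping.keys f"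
    and "\<And>j q. q \<in> Poly_Mapping.keys f \<Longrightarrow> Poly_Mapping.lookup q j \<le> Poly_Mapping.lookup (M j) j"
proof -
  have "\<exists>m\<in>Poly_Mapping.keys f. \<forall>q\<in>Poly_Mapping.keys f. Poly_Mapping.lookup q j \<le> Poly_Mapping.lookup m j"
    for j
  proof -
    let ?E = "(\<lambda>q. Poly_Mapping.lookup q j) ` Poly_Mapping.keys f"
    have "finite ?E" and "?E \<noteq> {}"
      using assms by auto
    then have "Max ?E \<in> ?E" and "\<forall>q\<in>Poly_Mapping.keys f. Poly_Mapping.lookup q j \<le> Max ?E"
      by auto
    then show ?thesis
      by force
  qed
  then show ?thesis
    using that by metis
qed

lemma lookup_single_add_less:
  fixes q m :: "'v \<Rightarrow>\<^sub>0 nat"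
  assumes "k \<noteq> j" and "Poly_Mapping.lookup q j \<le> Poly_Mapping.lookup m j"
  shows "Poly_Mapping.lookup (Poly_Mapping.single k 1 + q) j < Poly_Mapping.lookup (Poly_Mapping.single j 1 + m) j"
  using assms by (simp add: lookup_add lookup_single)

context
  fixes f :: mpoly and j :: nat and m :: "nat \<Rightarrow>\<^sub>0 nat"
  assumes max_exponent: "\<And>q. q \<in> Poly_Mapping.keys f \<Longrightarrow> Poly_Mapping.lookup q j \<le> Poly_Mapping.lookup m j"
begin

lemma lookup_Var_mult_other_at_max_key:
  assumes "k \<noteq> j"
  shows "Poly_Mapping.lookup (Var k * f) (Poly_Mapping.single j 1 + m) = 0"
  unfolding Var_def
proof (rule lookup_single_mult_eq_0)
  fix q
  assume "q \<in> Poly_Mapping.keys f"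
  have "Poly_Mapping.lookup (Poly_Mapping.single k 1 + q) j < Poly_Mapping.lookup (Poly_Mapping.single j 1 + m) j"
    using \<open>k \<noteq> j\<close> max_exponent[OF \<open>q \<in> Poly_Mapping.keys f\<close>] by (rule lookup_single_add_less)
  then show "Poly_Mapping.single k 1 + q \<noteq> Poly_Mapping.single j 1 + m"
    by auto
qed

lemma lookup_sum_Var_mult_at_max_key:
  assumes "finite J" "j \<in> J"
  shows "Poly_Mapping.lookup ((\<Sum>k\<in>J. Var k) * f) (Poly_Mapping.single j 1 + m) = Poly_Mapping.lookup f m"
proof -
  have others: "(\<Sum>k\<in>J - {j}. Poly_Mapping.lookup (Var k * f) (Poly_Mapping.single j 1 + m)) = 0"
    using lookup_Var_mult_other_at_max_key by (intro sum.neutral) blast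
  have "Poly_Mapping.lookup ((\<Sum>k\<in>J. Var k) * f) (Poly_Mapping.single j 1 + m)
      = (\<Sum>k\<in>J. Poly_Mapping.lookup (Var k * f) (Poly_Mapping.single j 1 + m))"
    by (simp add: sum_distrib_right lookup_sum)
  also have "\<dots> = Poly_Mapping.lookup (Var j * f) (Poly_Mapping.single j 1 + m)"
    using assms others by (simp add: sum.remove)
  also have "\<dots> = Poly_Mapping.lookup f m"
    by (simp add: Var_def lookup_single_mult_add)
  finally show ?thesis .
qed

end

lemma card_keys_sum_Var_mult:
  fixes f :: mpoly
  assumes "finite J" and "f \<noteq> 0"
  shows "card J \<le> card (Poly_Mapping.keys ((\<Sum>j\<in>J. Var j) * f))"
proof -
  obtain M where M_key: "\<And>j. M j \<in> Poly_Mapping.keys f"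
    and M_max: "\<And>j q. q \<in> Poly_Mapping.keys f \<Longrightarrow> Poly_Mapping.lookup q j \<le> Poly_Mapping.lookup (M j) j"
    using obtain_keys_with_max_exponents[OF \<open>f \<noteq> 0\<close>] by blast
  define g where "g j = Poly_Mapping.single j 1 + M j" for j
  have "g ` J \<subseteq> Poly_Mapping.keys ((\<Sum>j\<in>J. Var j) * f)"
    using lookup_sum_Var_mult_at_max_key[OF M_max \<open>finite J\<close>] M_key
    by (auto simp: g_def in_keys_iff)
  moreover have "inj_on g J"
  proof (rule inj_onI)
    fix j k
    assume "g j = g k"
    show "j = k"
    proof (rule ccontr)
      assume "j \<noteq> k"
      then have "Poly_Mapping.lookup (g k) j < Poly_Mapping.lookup (g j) j"
        unfolding g_def using M_max M_key by (intro lookup_single_add_less) auto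
      with \<open>g j = g k\<close> show False
        by simp
    qed
  qed
  ultimately show ?thesis
    by (rule card_inj_on_le[rotated, OF _ finite_keys])
qed

theorem lemma3:
  fixes n :: nat and f :: mpoly
  assumes "in_vars n f" and "f \<noteq> 0"
  shows "n \<le> card (Poly_Mapping.keys ((\<Sum>j<n. Var j) * f))"
  using card_keys_sum_Var_mult[of "{..<n}" f] \<open>f \<noteq> 0\<close> by simp

end
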